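(* In the Neutralization-Based Reclamation (NBR) scheme described in the context, the number of nodes that are retired but not yet reclaimed is bounded (in every execution, including executions in which threads are delayed or crash).
   Context: Setting: an asynchronous shared-memory system with a fixed number $p$ of threads operating on a linked concurrent data structure; each unlinked node is retired by exactly one thread. NBR works as follows. Each thread has a private limbo bag of retired nodes, a thread-local flag restartable, and a row of a shared array reservations; each data structure operation reserves at most $k$ nodes, where $k$ is strictly smaller than the limbo bag size threshold $h$. Operations consist of read phases (start from an entry point, read only; restartable set to true at the start after clearing reservations) and write phases (entered after writing reservations of all nodes to be accessed in the write phase and setting restartable to false; only reserved nodes are accessed). On a neutralizing signal a thread with restartable true discards its private references and restarts its read phase from a checkpoint; a thread with restartable false ignores the signal. A thread appends each node it retires to its limbo bag; whenever the limbo bag exceeds the threshold $h$, the thread signals all other threads, scans all reservations, and frees every node in its limbo bag that is not reserved. Signals are assumed to be handled by the recipient before it takes any further step once the sender finishes sending. *)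

theory Defs
  imports Main
begin

text \<open>Abstract model of Neutralization-Based Reclamation (NBR) with p threads
  (numbered 0..p-1), at most k reservations per operation and limbo-bag
  threshold h.  Executions are arbitrary interleavings of
  atomic thread steps; a delayed or crashed thread simply takes no (further)
  steps, so every such execution is covered by reachability.\<close>

record 'a nbr_state =
  bag         :: "nat \<Rightarrow> 'a set"         \<comment> \<open>private limbo bag of each thread\<close>
  res         :: "nat \<Rightarrow> 'a set"         \<comment> \<open>row of the shared reservations array\<close>
  restartable :: "nat \<Rightarrow> bool"
  phase       :: "nat \<Rightarrow> nat option"     \<comment> \<open>None: normal; Some j: reclaiming, next row to scan is j\<close>
  scanned     :: "nat \<Rightarrow> 'a set"
  retired     :: "'a set"                 \<comment> \<open>all nodes ever retired\<close>

definition nbr_init :: "'a nbr_state" where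
  "nbr_init = \<lparr> bag = (\<lambda>_. {}), res = (\<lambda>_. {}), restartable = (\<lambda>_. True),
                phase = (\<lambda>_. None), scanned = (\<lambda>_. {}), retired = {} \<rparr>"

inductive nbr_step :: "nat \<Rightarrow> nat \<Rightarrow> nat \<Rightarrow> 'a nbr_state \<Rightarrow> 'a nbr_state \<Rightarrow> bool"
  for p k h :: nat where
  start_read: "\<lbrakk> t < p; phase s t = None \<rbrakk> \<Longrightarrow>
     nbr_step p k h s (s\<lparr> res := (res s)(t := {}), restartable := (restartable s)(t := True) \<rparr>)"
| reserve: "\<lbrakk> t < p; phase s t = None; restartable s t; finite R; card (res s t \<union> R) \<le> k \<rbrakk> \<Longrightarrow>
     nbr_step p k h s (s\<lparr> res := (res s)(t := res s t \<union> R) \<rparr>)"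
  \<comment> \<open>enter the write phase\<close>
| enter_write: "\<lbrakk> t < p; phase s t = None; restartable s t \<rbrakk> \<Longrightarrow>
     nbr_step p k h s (s\<lparr> restartable := (restartable s)(t := False) \<rparr>)"
| retire: "\<lbrakk> t < p; phase s t = None; \<not> restartable s t; x \<notin> retired s;
             card (insert x (bag s t)) \<le> h \<rbrakk> \<Longrightarrow>
     nbr_step p k h s (s\<lparr> bag := (bag s)(t := insert x (bag s t)), retired := insert x (retired s) \<rparr>)"
  \<comment> \<open>retire a node, the bag exceeds h: neutralizing signal to all other threads
      (handled immediately: restartable threads restart their read phase, clearing
      their reservations; non-restartable threads ignore it), then start scanning\<close>
| retire_reclaim: "\<lbrakk> t < p; phase s t = None; \<not> restartable s t; x \<notin> retired s;
             card (insert x (bag s t)) > h \<rbrakk> \<Longrightarrow>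
     nbr_step p k h s (s\<lparr> bag := (bag s)(t := insert x (bag s t)), retired := insert x (retired s),
        res := (\<lambda>j. if j < p \<and> j \<noteq> t \<and> restartable s j then {} else res s j),
        phase := (phase s)(t := Some 0), scanned := (scanned s)(t := {}) \<rparr>)"
| scan: "\<lbrakk> t < p; phase s t = Some j; j < p \<rbrakk> \<Longrightarrow>
     nbr_step p k h s (s\<lparr> scanned := (scanned s)(t := scanned s t \<union> res s j),
                         phase := (phase s)(t := Some (Suc j)) \<rparr>)"
| free: "\<lbrakk> t < p; phase s t = Some p \<rbrakk> \<Longrightarrow>
     nbr_step p k h s (s\<lparr> bag := (bag s)(t := {x \<in> bag s t. x \<in> scanned s t}),
                         phase := (phase s)(t := None) \<rparr>)"

definition unreclaimed :: "nat \<Rightarrow> 'a nbr_state \<Rightarrow> 'a set" where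
  "unreclaimed p s = (\<Union>t<p. bag s t)"

end

theory Submission
  imports Defs
begin

text \<open>A reclamation pass frees every node of the bag except those it saw reserved, and it
  scans p rows of at most k reservations each, so at most \<open>p * k\<close> nodes survive a pass.
  Between passes a thread retires nodes only while its bag stays within h, and the retirement
  that overflows the threshold adds one more node before the next pass. Hence every limbo bag
  holds at most \<open>h + p * k + 1\<close> nodes at all times, and the p bags together at most
  \<open>p * (h + p * k + 1)\<close>. The bound holds even without the hypothesis \<open>k < h\<close>.\<close>

definition nbr_invariant :: "nat \<Rightarrow> nat \<Rightarrow> nat \<Rightarrow> 'a nbr_state \<Rightarrow> bool" where
  "nbr_invariant p k h s \<longleftrightarrow>
     (\<forall>t. finite (res s t) \<and> card (res s t) \<le> k) \<and>
     (\<forall>t. finite (bag s t) \<and> card (bag s t) \<le> h + p * k + 1) \<and>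
     (\<forall>t. phase s t = None \<longrightarrow> card (bag s t) \<le> h + p * k) \<and>
     (\<forall>t j. phase s t = Some j \<longrightarrow> j \<le> p \<and> finite (scanned s t) \<and> card (scanned s t) \<le> j * k)"

lemma nbr_invariant_init: "nbr_invariant p k h nbr_init"
  by (simp add: nbr_invariant_def nbr_init_def)

lemma nbr_step_preserves_invariant:
  assumes "nbr_step p k h s s'" and "nbr_invariant p k h s"
  shows "nbr_invariant p k h s'"
  using assms
proof induction
  case (retire_reclaim t s x)
  then have "finite (bag s t)" and "card (bag s t) \<le> h + p * k"
    by (auto simp: nbr_invariant_def)
  then have "card (insert x (bag s t)) \<le> h + p * k + 1"
    by (simp add: card_insert_if)
  with retire_reclaim show ?case
    by (auto simp: nbr_invariant_def)
next
  case (scan t s j)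
  then have "card (scanned s t) \<le> j * k" and "card (res s j) \<le> k"
    by (auto simp: nbr_invariant_def)
  then have "card (scanned s t \<union> res s j) \<le> Suc j * k"
    using card_Un_le[of "scanned s t" "res s j"] by simp
  with scan show ?case
    by (auto simp: nbr_invariant_def)
next
  case (free t s)
  then have "finite (scanned s t)" and "card (scanned s t) \<le> p * k"
    unfolding nbr_invariant_def by blast+
  moreover have "{x \<in> bag s t. x \<in> scanned s t} \<subseteq> scanned s t" by blast
  ultimately have "card {x \<in> bag s t. x \<in> scanned s t} \<le> p * k"
    by (meson card_mono order_trans)
  with free show ?case
    by (auto simp: nbr_invariant_def)
qed (auto simp: nbr_invariant_def)

lemma nbr_invariant_reachable:
  "(nbr_step p k h)\<^sup>*\<^sup>* nbr_init s \<Longrightarrow> nbr_invariant p k h s"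
  by (induction rule: rtranclp_induct) (auto intro: nbr_invariant_init nbr_step_preserves_invariant)

lemma card_UN_le_card_mult:
  assumes "finite I" and "\<And>i. i \<in> I \<Longrightarrow> card (A i) \<le> m"
  shows "card (\<Union>i\<in>I. A i) \<le> card I * m"
proof -
  have "card (\<Union>i\<in>I. A i) \<le> (\<Sum>i\<in>I. card (A i))" using assms(1) by (rule card_UN_le)
  also have "\<dots> \<le> (\<Sum>i\<in>I. m)" by (rule sum_mono) (rule assms(2))
  finally show ?thesis by simp
qed

lemma unreclaimed_bounded:
  assumes "nbr_invariant p k h s"
  shows "finite (unreclaimed p s)" and "card (unreclaimed p s) \<le> p * (h + p * k + 1)"
proof -
  have "finite (bag s t)" and "card (bag s t) \<le> h + p * k + 1" for t
    using assms unfolding nbr_invariant_def by blast+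
  then show "finite (unreclaimed p s)" and "card (unreclaimed p s) \<le> p * (h + p * k + 1)"
    using card_UN_le_card_mult[of "{..<p}" "bag s" "h + p * k + 1"]
    by (simp_all add: unreclaimed_def)
qed

theorem lemma7:
  fixes p k h :: nat
  assumes "k < h"
  shows "\<exists>B::nat. \<forall>s :: 'a nbr_state. (nbr_step p k h)\<^sup>*\<^sup>* nbr_init s \<longrightarrow>
           finite (unreclaimed p s) \<and> card (unreclaimed p s) \<le> B"
proof -
  have "finite (unreclaimed p s) \<and> card (unreclaimed p s) \<le> p * (h + p * k + 1)"
    if "(nbr_step p k h)\<^sup>*\<^sup>* nbr_init s" for s :: "'a nbr_state"
    using unreclaimed_bounded[OF nbr_invariant_reachable[OF that]] by simp
  then show ?thesis by blast
qed

end
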